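(* Let $k\ge1$, $\alpha\in\mathrm{REWB}_k$, and let $N=(Q,\Sigma\uplus B_k\uplus[k],\delta,q_0,F)$ be a nondeterministic finite automaton with $L(N)=\mathcal{R}_k(\alpha)$ in which every state can reach some final state (for every $q\in Q$ there are $w$ and $q_f\in F$ with $q\overset{w}{\Rightarrow}q_f$). Then for every $q\in Q$ and every $w\in(\Sigma\uplus B_k\uplus[k])^\ast$, if $q_0\overset{w}{\Rightarrow}q$ in $N$ then $w$ is matching.
   Context: Fix a finite alphabet $\Sigma$. For $k\ge1$, $[k]=\{1,\dots,k\}$, $B_k=\{[_i,\,]_i:i\in[k]\}$ (fresh brackets, pairwise disjoint from $\Sigma$ and $[k]$). $q\overset{w}{\Rightarrow}q'$ means $q'$ is reachable from $q$ by reading $w$. Rewbs: $\mathrm{REWB}_k$ and $\mathrm{var}(\alpha)\subseteq[k]$ defined inductively: $a\in\Sigma\cup\{\varepsilon\}$ ($\mathrm{var}=\emptyset$); $\backslash i$, $i\in[k]$ ($\mathrm{var}=\{i\}$); $\alpha_0\alpha_1$, $\alpha_0+\alpha_1$ (union of vars); $\alpha_0^\ast$; $(_j\alpha_0)_j$ for $j\notin\mathrm{var}(\alpha_0)$ (var gains $j$). $\mathcal{R}_k(\alpha)$ is the regular language over $\Sigma\uplus B_k\uplus[k]$ obtained by reading $\alpha$ as a regular expression with $\backslash i$ as letter $i$ and $(_i\alpha_0)_i$ as $[_i\,\mathcal{R}_k(\alpha_0)\,]_i$. Matching: write $v=v_0n_1v_1\cdots n_mv_m$ uniquely with $v_r\in(\Sigma\uplus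 B_k)^\ast$, $n_r\in[k]$, and $y_r=v_0n_1\cdots n_rv_r$. $v$ is matching if for every $r\in\{1,\dots,m\}$ and all $x_1,x_2$ with $y_{r-1}=x_1[_{n_r}x_2$ there exist $x_2',x_3$ with $x_2=x_2'\,]_{n_r}x_3$ and $x_2'$ containing neither $[_{n_r}$ nor $]_{n_r}$. *)

theory Defs
  imports Main
begin

text \<open>Letters of the extended alphabet Sigma + B_k + [k]:
  Chr a (a in Sigma), Open i = [_i, Close i = ]_i, Ref i = the letter i of [k].\<close>
datatype 'a sym = Chr 'a | Open nat | Close nat | Ref nat

definition valid_sym :: "nat \<Rightarrow> 'a sym \<Rightarrow> bool" where
  "valid_sym k s = (case s of Chr a \<Rightarrow> True
                      | Open i \<Rightarrow> i \<in> {1..k}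
                      | Close i \<Rightarrow> i \<in> {1..k}
                      | Ref i \<Rightarrow> i \<in> {1..k})"

definition alphabet :: "nat \<Rightarrow> 'a sym set" where
  "alphabet k = {s. valid_sym k s}"

datatype 'a rewb =
    Lit 'a | Eps | BRef nat
  | Cat "'a rewb" "'a rewb" | Alt "'a rewb" "'a rewb"
  | Star "'a rewb" | Grp nat "'a rewb"

fun var :: "'a rewb \<Rightarrow> nat set" where
  "var (Lit a) = {}"
| "var Eps = {}"
| "var (BRef i) = {i}"
| "var (Cat a b) = var a \<union> var b"
| "var (Alt a b) = var a \<union> var b"
| "var (Star a) = var a"
| "var (Grp j a) = insert j (var a)"

fun is_rewb :: "nat \<Rightarrow> 'a rewb \<Rightarrow> bool" where
  "is_rewb k (Lit a) = True"
| "is_rewb k Eps = True"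
| "is_rewb k (BRef i) = (i \<in> {1..k})"
| "is_rewb k (Cat a b) = (is_rewb k a \<and> is_rewb k b)"
| "is_rewb k (Alt a b) = (is_rewb k a \<and> is_rewb k b)"
| "is_rewb k (Star a) = is_rewb k a"
| "is_rewb k (Grp j a) = (j \<in> {1..k} \<and> j \<notin> var a \<and> is_rewb k a)"

definition conc :: "'b list set \<Rightarrow> 'b list set \<Rightarrow> 'b list set" where
  "conc A B = {u @ v | u v. u \<in> A \<and> v \<in> B}"

definition kstar :: "'b list set \<Rightarrow> 'b list set" where
  "kstar A = {concat ws | ws. set ws \<subseteq> A}"

fun Rk :: "'a rewb \<Rightarrow> 'a sym list set" where
  "Rk (Lit a) = {[Chr a]}"
| "Rk Eps = {[]}"
| "Rk (BRef i) = {[Ref i]}"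
| "Rk (Cat a b) = conc (Rk a) (Rk b)"
| "Rk (Alt a b) = Rk a \<union> Rk b"
| "Rk (Star a) = kstar (Rk a)"
| "Rk (Grp j a) = conc {[Open j]} (conc (Rk a) {[Close j]})"

definition is_nfa :: "'s set \<Rightarrow> 'b set \<Rightarrow> ('s \<times> 'b \<times> 's) set \<Rightarrow> 's \<Rightarrow> 's set \<Rightarrow> bool" where
  "is_nfa Q A delta q0 F \<longleftrightarrow> finite Q \<and> finite A \<and> delta \<subseteq> Q \<times> A \<times> Q \<and> q0 \<in> Q \<and> F \<subseteq> Q"

inductive steps :: "('s \<times> 'b \<times> 's) set \<Rightarrow> 's \<Rightarrow> 'b list \<Rightarrow> 's \<Rightarrow> bool" where
  steps_nil: "steps delta q [] q"
| steps_cons: "(q, a, q') \<in> delta \<Longrightarrow> steps delta q' w q'' \<Longrightarrow> steps delta q (a # w) q''"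

definition nfa_lang :: "('s \<times> 'b \<times> 's) set \<Rightarrow> 's \<Rightarrow> 's set \<Rightarrow> 'b list set" where
  "nfa_lang delta q0 F = {w. \<exists>qf\<in>F. steps delta q0 w qf}"

text \<open>Matching words (y ranges over the prefixes y_{r-1} preceding a reference letter n).\<close>
definition matching :: "'a sym list \<Rightarrow> bool" where
  "matching v \<longleftrightarrow>
     (\<forall>y n z. v = y @ [Ref n] @ z \<longrightarrow>
        (\<forall>x1 x2. y = x1 @ [Open n] @ x2 \<longrightarrow>
           (\<exists>x2' x3. x2 = x2' @ [Close n] @ x3 \<and> Open n \<notin> set x2' \<and> Close n \<notin> set x2')))"

end

theory Submission
  imports Defs
begin

text \<open>Every word of \<open>\<R>\<^sub>k(\<alpha>)\<close> is \<open>n\<close>-closed for every \<open>n\<close>: each \<open>[\<^sub>n\<close> is followed by a \<open>]\<^sub>n\<close>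
  with no \<open>[\<^sub>n\<close>, \<open>]\<^sub>n\<close> or reference \<open>n\<close> in between. Since \<open>n \<notin> var \<alpha>\<^sub>0\<close> in \<open>(\<^sub>n\<alpha>\<^sub>0)\<^sub>n\<close>,
  a group is closed before \<open>n\<close> can be referenced again, and \<open>n\<close>-closedness is preserved by
  concatenation, so it holds by induction on \<open>\<alpha>\<close>; it clearly implies matching.
  As every state of the automaton is co-reachable, every word read from the initial state
  is a prefix of a word of \<open>L(N) = \<R>\<^sub>k(\<alpha>)\<close>, and matching is closed under prefixes.\<close>

definition group_closed :: "nat \<Rightarrow> 'a sym list \<Rightarrow> bool" where
  "group_closed n v \<longleftrightarrow> (\<forall>x1 x2. v = x1 @ Open n # x2 \<longrightarrow>
     (\<exists>s t. x2 = s @ Close n # t \<and> Open n \<notin> set s \<and> Close n \<notin> set s \<and> Ref n \<notin> set s))"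

lemma group_closed_Nil: "group_closed n []"
  by (simp add: group_closed_def)

lemma group_closed_append:
  assumes u: "group_closed n u" and v: "group_closed n v"
  shows "group_closed n (u @ v)"
  unfolding group_closed_def
proof (intro allI impI)
  fix x1 x2 assume "u @ v = x1 @ Open n # x2"
  then obtain us where "u = x1 @ us \<and> us @ v = Open n # x2 \<or> u @ us = x1 \<and> v = us @ Open n # x2"
    by (auto simp: append_eq_append_conv2)
  then show "\<exists>s t. x2 = s @ Close n # t \<and> Open n \<notin> set s \<and> Close n \<notin> set s \<and> Ref n \<notin> set s"
  proof (elim disjE conjE)
    assume u_split: "u = x1 @ us" and "us @ v = Open n # x2"
    show ?thesis
    proof (cases us)
      case Nil
      with \<open>us @ v = Open n # x2\<close> have "v = [] @ Open n # x2" by simp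
      with v show ?thesis unfolding group_closed_def by blast
    next
      case (Cons a us')
      with u_split \<open>us @ v = Open n # x2\<close> have "u = x1 @ Open n # us'" "x2 = us' @ v" by auto
      with u obtain s t where "us' = s @ Close n # t" "Open n \<notin> set s" "Close n \<notin> set s" "Ref n \<notin> set s"
        unfolding group_closed_def by blast
      with \<open>x2 = us' @ v\<close> show ?thesis by (intro exI[of _ s] exI[of _ "t @ v"]) simp
    qed
  next
    assume "v = us @ Open n # x2"
    with v show ?thesis unfolding group_closed_def by blast
  qed
qed

lemma group_closed_concat: "\<forall>w\<in>set ws. group_closed n w \<Longrightarrow> group_closed n (concat ws)"
  by (induction ws) (auto simp: group_closed_Nil group_closed_append)

lemma group_closed_single: "s \<noteq> Open n \<Longrightarrow> group_closed n [s]"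
  by (auto simp: group_closed_def Cons_eq_append_conv)

lemma group_closed_group:
  assumes "Open n \<notin> set u" "Close n \<notin> set u" "Ref n \<notin> set u"
  shows "group_closed n (Open n # u @ [Close n])"
  unfolding group_closed_def
proof (intro allI impI)
  fix x1 x2 assume split: "Open n # u @ [Close n] = x1 @ Open n # x2"
  have "x1 = []"
  proof (rule ccontr)
    assume "x1 \<noteq> []"
    with split have "Open n \<in> set (u @ [Close n])" by (cases x1) auto
    with assms show False by simp
  qed
  with split assms show "\<exists>s t. x2 = s @ Close n # t \<and> Open n \<notin> set s \<and> Close n \<notin> set s \<and> Ref n \<notin> set s"
    by auto
qed

lemma kstarE:
  assumes "w \<in> kstar A"
  obtains ws where "w = concat ws" "set ws \<subseteq> A"
  using assms by (auto simp: kstar_def)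

lemma Rk_no_letters_outside_var:
  "w \<in> Rk a \<Longrightarrow> n \<notin> var a \<Longrightarrow> Open n \<notin> set w \<and> Close n \<notin> set w \<and> Ref n \<notin> set w"
proof (induction a arbitrary: w)
  case (Star a)
  then obtain ws where "w = concat ws" "set ws \<subseteq> Rk a" by (auto elim: kstarE)
  with Star.IH Star.prems(2) show ?case by auto
qed (auto simp: conc_def)

lemma group_closed_Rk: "is_rewb k a \<Longrightarrow> w \<in> Rk a \<Longrightarrow> group_closed n w"
proof (induction a arbitrary: w)
  case (Cat a1 a2)
  then show ?case by (auto simp: conc_def intro: group_closed_append)
next
  case (Star a)
  then obtain ws where "w = concat ws" "set ws \<subseteq> Rk a" by (auto elim: kstarE)
  with Star.IH Star.prems(1) show ?case by (auto intro: group_closed_concat)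
next
  case (Grp j a)
  then obtain u where w: "w = Open j # u @ [Close j]" and u: "u \<in> Rk a"
    and j: "j \<notin> var a" and a: "is_rewb k a"
    by (auto simp: conc_def)
  show ?case
  proof (cases "n = j")
    case True
    with Rk_no_letters_outside_var[OF u j] w show ?thesis by (simp add: group_closed_group)
  next
    case False
    have "group_closed n [Open j]" "group_closed n [Close j]"
      using False by (simp_all add: group_closed_single)
    with Grp.IH[OF a u] have "group_closed n ([Open j] @ u @ [Close j])"
      by (blast intro: group_closed_append)
    with w show ?thesis by simp
  qed
qed (auto intro: group_closed_Nil group_closed_single)

lemma matching_if_group_closed:
  assumes "\<And>n. group_closed n v"
  shows "matching v"
  unfolding matching_def
proof (intro allI impI)
  fix y n z x1 x2
  assume "v = y @ [Ref n] @ z" and "y = x1 @ [Open n] @ x2"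
  then have "v = x1 @ Open n # (x2 @ Ref n # z)" by simp
  with assms[of n] obtain s t where st: "x2 @ Ref n # z = s @ Close n # t"
    and s: "Open n \<notin> set s" "Close n \<notin> set s" "Ref n \<notin> set s"
    unfolding group_closed_def by blast
  from st obtain us where "x2 = s @ us \<and> us @ Ref n # z = Close n # t \<or> x2 @ us = s \<and> Ref n # z = us @ Close n # t"
    by (auto simp: append_eq_append_conv2)
  then show "\<exists>x2' x3. x2 = x2' @ [Close n] @ x3 \<and> Open n \<notin> set x2' \<and> Close n \<notin> set x2'"
  proof (elim disjE conjE)
    assume "x2 = s @ us" "us @ Ref n # z = Close n # t"
    then have "x2 = s @ [Close n] @ tl us" by (cases us) auto
    with s show ?thesis by blast
  next
    assume "x2 @ us = s" "Ref n # z = us @ Close n # t"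
    \<comment> \<open>the closing bracket cannot lie beyond the reference, which must not occur in \<open>s\<close>\<close>
    then have "Ref n \<in> set s" by (cases us) auto
    with s show ?thesis by blast
  qed
qed

lemma matching_append_imp: "matching (w @ u) \<Longrightarrow> matching w"
  unfolding matching_def by (metis append.assoc)

lemma steps_append: "steps delta q w q' \<Longrightarrow> steps delta q' u q'' \<Longrightarrow> steps delta q (w @ u) q''"
  by (induction rule: steps.induct) (auto intro: steps.intros)

lemma prefix_in_nfa_lang:
  assumes "steps delta q0 w q" and "steps delta q u qf" and "qf \<in> F"
  shows "w @ u \<in> nfa_lang delta q0 F"
  unfolding nfa_lang_def using assms by (blast intro: steps_append)

theorem mainTheorem5:
  fixes k :: nat and \<alpha> :: "('a::finite) rewb"
    and Q :: "'s set" and delta :: "('s \<times> 'a sym \<times> 's) set" and q0 :: 's and F :: "'s set"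
  assumes "k \<ge> 1"
    and "is_rewb k \<alpha>"
    and "is_nfa Q (alphabet k) delta q0 F"
    and "nfa_lang delta q0 F = Rk \<alpha>"
    and "\<forall>q\<in>Q. \<exists>w. \<exists>qf\<in>F. steps delta q w qf"
  shows "\<forall>q\<in>Q. \<forall>w \<in> lists (alphabet k). steps delta q0 w q \<longrightarrow> matching w"
proof (intro ballI impI)
  fix q w assume "q \<in> Q" and w: "steps delta q0 w q"
  with assms(5) obtain u qf where "qf \<in> F" "steps delta q u qf" by blast
  with w have "w @ u \<in> Rk \<alpha>" using prefix_in_nfa_lang assms(4) by metis
  then have "matching (w @ u)"
    using group_closed_Rk[OF assms(2)] matching_if_group_closed by blast
  then show "matching w" by (rule matching_append_imp)
qed

end
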